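(* Let $K\ge2$. Then for all $x,y\in\mathbb{R}^K$, $\|\mathrm{softmax}(x)-\mathrm{softmax}(y)\|_2\le L_K\|x-y\|_2$ with a constant $L_K\le\frac{K-1}{K}$.
   Context: $\mathrm{softmax}:\mathbb{R}^K\to\mathbb{R}^K$, $\{\mathrm{softmax}(x)\}_i=e^{x_i}/\sum_{j=1}^Ke^{x_j}$; $\|\cdot\|_2$ is the Euclidean norm. *)

theory Defs
  imports "HOL-Analysis.Analysis"
begin

definition softmax :: "real ^ 'n \<Rightarrow> real ^ 'n" where
  "softmax x = (\<chi> i. exp (x $ i) / (\<Sum>j\<in>UNIV. exp (x $ j)))"

end

(* Put d = x - y, u = softmax x - softmax y and h t = <u, softmax (y + t d)>. The derivative of
   h is the covariance of u and d under the probability vector p = softmax (y + t d), since the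
   Jacobian of softmax is diag p - p p^T. A weighted variance is at most half the squared
   Euclidean norm, so by Cauchy-Schwarz that covariance is at most |u| |d| / 2, and the mean
   value theorem gives |u|^2 = h 1 - h 0 <= |u| |d| / 2. Hence L = 1/2 works, and
   1/2 <= (K - 1) / K for K >= 2. *)
theory Submission
  imports Defs
begin

definition prob_vector :: "real ^ 'n \<Rightarrow> bool" where
  "prob_vector p \<longleftrightarrow> (\<forall>i. 0 \<le> p $ i) \<and> (\<Sum>i\<in>UNIV. p $ i) = 1"

definition wcov :: "real ^ 'n \<Rightarrow> real ^ 'n \<Rightarrow> real ^ 'n \<Rightarrow> real" where
  "wcov p a b = (\<Sum>i\<in>UNIV. p $ i * (a $ i - p \<bullet> a) * (b $ i - p \<bullet> b))"

lemma wcov_eq_raw_moments: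
  assumes "(\<Sum>i\<in>UNIV. p $ i) = 1"
  shows "wcov p a b = (\<Sum>i\<in>UNIV. p $ i * a $ i * b $ i) - (p \<bullet> a) * (p \<bullet> b)"
proof -
  have "wcov p a b = (\<Sum>i\<in>UNIV. p $ i * a $ i * b $ i) - (p \<bullet> b) * (\<Sum>i\<in>UNIV. p $ i * a $ i)
      - (p \<bullet> a) * (\<Sum>i\<in>UNIV. p $ i * b $ i) + (p \<bullet> a) * (p \<bullet> b) * (\<Sum>i\<in>UNIV. p $ i)"
    unfolding wcov_def by (simp add: algebra_simps sum.distrib sum_subtractf sum_distrib_left)
  then show ?thesis
    by (simp add: assms inner_vec_def)
qed

lemma wcov_le_sqrt_wcov:
  fixes p a b :: "real ^ 'n"
  assumes "\<And>i. 0 \<le> p $ i"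
  shows "wcov p a b \<le> sqrt (wcov p a a) * sqrt (wcov p b b)"
proof -
  define c :: "real ^ 'n \<Rightarrow> real ^ 'n" where "c v = (\<chi> i. sqrt (p $ i) * (v $ i - p \<bullet> v))" for v
  have wcov_inner: "wcov p v w = c v \<bullet> c w" for v w
    unfolding wcov_def c_def inner_vec_def
    by (rule sum.cong) (use assms in \<open>auto simp: real_sqrt_mult_self\<close>)
  have "sqrt (wcov p v v) = norm (c v)" for v
    by (simp add: wcov_inner norm_eq_sqrt_inner)
  then show ?thesis
    by (simp add: wcov_inner norm_cauchy_schwarz)
qed

lemma pair_sum_square_eq:
  fixes p v :: "'i::finite \<Rightarrow> real"
  assumes "(\<Sum>i\<in>UNIV. p i) = 1"
  shows "(\<Sum>i\<in>UNIV. \<Sum>j\<in>UNIV. p i * p j * (v i + v j)\<^sup>2)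
    = 2 * (\<Sum>i\<in>UNIV. p i * (v i)\<^sup>2) + 2 * (\<Sum>i\<in>UNIV. p i * v i)\<^sup>2"
proof -
  have "(\<Sum>i\<in>UNIV. \<Sum>j\<in>UNIV. p i * p j * (v i + v j)\<^sup>2)
      = (\<Sum>i\<in>UNIV. \<Sum>j\<in>UNIV. p i * (v i)\<^sup>2 * p j + p i * (p j * (v j)\<^sup>2)
          + 2 * p i * v i * (p j * v j))"
    by (intro sum.cong refl) (simp add: power2_eq_square algebra_simps)
  also have "\<dots> = (\<Sum>i\<in>UNIV. p i * (v i)\<^sup>2) * (\<Sum>j\<in>UNIV. p j)
      + (\<Sum>i\<in>UNIV. p i) * (\<Sum>j\<in>UNIV. p j * (v j)\<^sup>2)
      + (\<Sum>i\<in>UNIV. 2 * p i * v i) * (\<Sum>j\<in>UNIV. p j * v j)"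
    by (simp only: sum.distrib sum_product)
  finally show ?thesis
    by (simp add: assms power2_eq_square sum_distrib_left[symmetric] mult.assoc)
qed

(* Dropping the off-diagonal terms of pair_sum_square_eq gives
   wcov p v v <= 2 * (SUM i. p_i (1 - p_i) v_i^2), and 2 p (1 - p) <= 1/2. *)
lemma wcov_self_le_half_norm:
  assumes "prob_vector p"
  shows "wcov p v v \<le> (norm v)\<^sup>2 / 2"
proof -
  have p_nonneg: "\<And>i. 0 \<le> p $ i" and p_sum: "(\<Sum>i\<in>UNIV. p $ i) = 1"
    using assms by (auto simp: prob_vector_def)
  define m where "m = p \<bullet> v"
  define S where "S = (\<Sum>i\<in>UNIV. p $ i * (v $ i)\<^sup>2)"
  define Q where "Q = (\<Sum>i\<in>UNIV. (p $ i)\<^sup>2 * (v $ i)\<^sup>2)"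
  have "wcov p v v = S - m\<^sup>2"
    by (simp add: wcov_eq_raw_moments[OF p_sum] S_def m_def power2_eq_square mult.assoc)
  moreover have "4 * Q \<le> 2 * S + 2 * m\<^sup>2"
  proof -
    have "4 * Q = (\<Sum>i\<in>UNIV. p $ i * p $ i * (v $ i + v $ i)\<^sup>2)"
      by (simp add: Q_def sum_distrib_left power2_eq_square algebra_simps)
    also have "\<dots> \<le> (\<Sum>i\<in>UNIV. \<Sum>j\<in>UNIV. p $ i * p $ j * (v $ i + v $ j)\<^sup>2)"
      by (intro sum_mono member_le_sum) (auto simp: p_nonneg)
    also have "\<dots> = 2 * S + 2 * m\<^sup>2"
      using pair_sum_square_eq[OF p_sum, of "($) v"] by (simp add: S_def m_def inner_vec_def)
    finally show ?thesis .
  qed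
  moreover have "(\<Sum>i\<in>UNIV. 2 * p $ i * (1 - p $ i) * (v $ i)\<^sup>2) = 2 * S - 2 * Q"
    by (simp add: S_def Q_def sum_subtractf sum_distrib_left power2_eq_square algebra_simps)
  ultimately have "wcov p v v \<le> (\<Sum>i\<in>UNIV. 2 * p $ i * (1 - p $ i) * (v $ i)\<^sup>2)"
    by linarith
  also have "\<dots> \<le> (\<Sum>i\<in>UNIV. (v $ i)\<^sup>2 / 2)"
  proof (rule sum_mono)
    fix i
    have "2 * p $ i * (1 - p $ i) \<le> 1 / 2"
      using zero_le_power2[of "2 * p $ i - 1"] by (simp add: power2_eq_square algebra_simps)
    then show "2 * p $ i * (1 - p $ i) * (v $ i)\<^sup>2 \<le> (v $ i)\<^sup>2 / 2"
      by (rule order_trans[OF mult_right_mono[OF _ zero_le_power2]]) simp_all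
  qed
  also have "\<dots> = (norm v)\<^sup>2 / 2"
    unfolding power2_norm_eq_inner inner_vec_def by (simp add: sum_divide_distrib power2_eq_square)
  finally show ?thesis .
qed

lemma wcov_le_half_norm:
  assumes "prob_vector p"
  shows "wcov p a b \<le> norm a * norm b / 2"
proof -
  have p_nonneg: "\<And>i. 0 \<le> p $ i"
    using assms by (simp add: prob_vector_def)
  have b_var_nonneg: "0 \<le> wcov p b b"
    unfolding wcov_def by (intro sum_nonneg) (simp add: p_nonneg mult.assoc)
  have "wcov p a b \<le> sqrt (wcov p a a) * sqrt (wcov p b b)"
    using p_nonneg by (rule wcov_le_sqrt_wcov)
  also have "\<dots> \<le> sqrt ((norm a)\<^sup>2 / 2) * sqrt ((norm b)\<^sup>2 / 2)"
    using assms b_var_nonneg by (intro mult_mono real_sqrt_le_mono wcov_self_le_half_norm) auto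
  also have "\<dots> = norm a * norm b / 2"
    by (simp add: real_sqrt_divide real_sqrt_mult[symmetric])
  finally show ?thesis .
qed

lemma prob_vector_softmax: "prob_vector (softmax x)"
proof -
  have "0 < (\<Sum>j\<in>UNIV. exp (x $ j))"
    by (intro sum_pos) auto
  then show ?thesis
    by (simp add: prob_vector_def softmax_def sum_divide_distrib[symmetric])
qed

lemma inner_softmax_line_has_derivative:
  "((\<lambda>t. u \<bullet> softmax (y + t *\<^sub>R d)) has_real_derivative wcov (softmax (y + t *\<^sub>R d)) u d) (at t)"
proof -
  define E where "E t i = exp (y $ i + t * d $ i)" for t i
  define S where "S t = (\<Sum>i\<in>UNIV. E t i)" for t
  have S_pos: "0 < S t" for t
    unfolding S_def E_def by (intro sum_pos) auto
  have softmax_line: "softmax (y + t *\<^sub>R d) $ i = E t i / S t" for t i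
    unfolding softmax_def E_def S_def by simp
  have E_deriv: "((\<lambda>t. E t i) has_real_derivative E t i * d $ i) (at t)" for i
    unfolding E_def by (auto intro!: derivative_eq_intros)
  have "((\<lambda>t. (\<Sum>i\<in>UNIV. u $ i * E t i) / S t) has_real_derivative
      ((\<Sum>i\<in>UNIV. u $ i * (E t i * d $ i)) * S t - (\<Sum>i\<in>UNIV. u $ i * E t i) * (\<Sum>i\<in>UNIV. E t i * d $ i))
        / (S t * S t)) (at t)"
    unfolding S_def using S_pos[of t]
    by (intro DERIV_divide DERIV_sum DERIV_cmult E_deriv) (simp_all add: S_def)
  moreover have "(\<lambda>t. u \<bullet> softmax (y + t *\<^sub>R d)) = (\<lambda>t. (\<Sum>i\<in>UNIV. u $ i * E t i) / S t)"
    by (simp add: inner_vec_def softmax_line sum_divide_distrib)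
  moreover have "wcov (softmax (y + t *\<^sub>R d)) u d = ((\<Sum>i\<in>UNIV. u $ i * (E t i * d $ i)) * S t
      - (\<Sum>i\<in>UNIV. u $ i * E t i) * (\<Sum>i\<in>UNIV. E t i * d $ i)) / (S t * S t)"
    using prob_vector_softmax[of "y + t *\<^sub>R d"] S_pos[of t]
    by (simp add: prob_vector_def wcov_eq_raw_moments inner_vec_def softmax_line
        sum_divide_distrib[symmetric] field_simps)
  ultimately show ?thesis
    by simp
qed

lemma softmax_lipschitz_half: "norm (softmax x - softmax y) \<le> 1 / 2 * norm (x - y)"
proof -
  define u where "u = softmax x - softmax y"
  define d where "d = x - y"
  define h where "h t = u \<bullet> softmax (y + t *\<^sub>R d)" for t
  have "h 1 - h 0 = (norm u)\<^sup>2"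
    by (simp add: h_def d_def u_def power2_norm_eq_inner inner_diff_right)
  moreover obtain z where "h 1 - h 0 = (1 - 0) * wcov (softmax (y + z *\<^sub>R d)) u d"
    using MVT2[of 0 1 h "\<lambda>t. wcov (softmax (y + t *\<^sub>R d)) u d"]
      inner_softmax_line_has_derivative[of u y d] unfolding h_def by auto
  ultimately have "(norm u)\<^sup>2 \<le> norm u * norm d / 2"
    using wcov_le_half_norm[OF prob_vector_softmax, of "y + z *\<^sub>R d" u d] by simp
  then have "norm u \<le> norm d / 2"
    by (cases "norm u = 0") (auto simp: power2_eq_square)
  then show ?thesis
    by (simp add: u_def d_def)
qed

theorem lemma6:
  assumes "CARD('n) \<ge> 2"
  shows "\<exists>L::real. L \<le> (real CARD('n) - 1) / real CARD('n) \<and>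
           (\<forall>x y :: real ^ 'n. norm (softmax x - softmax y) \<le> L * norm (x - y))"
proof (intro exI conjI allI)
  show "1 / 2 \<le> (real CARD('n) - 1) / real CARD('n)"
    using assms by (simp add: field_simps)
  show "norm (softmax x - softmax y) \<le> 1 / 2 * norm (x - y)" for x y :: "real ^ 'n"
    by (rule softmax_lipschitz_half)
qed

end
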